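(* Let $a,b>0$ with $a\ne b$ and $\nu\in(0,1)$. Then $$\widetilde r(\nu)\big(\sqrt a-\sqrt b\big)^2\le a\nabla_\nu b-L_\nu(a,b)\le \widetilde R(\nu)\big(\sqrt a-\sqrt b\big)^2$$ and $$K(a,b)^{\widetilde r(\nu)}\,a\sharp_\nu b\le I_\nu(a,b)\le K(a,b)^{\widetilde R(\nu)}\,a\sharp_\nu b .$$
   Context: $a\nabla_\nu b:=(1-\nu)a+\nu b$, $a\sharp_\nu b:=a^{1-\nu}b^\nu$. Weighted logarithmic mean: $L_\nu(a,b):=\frac{1}{\log a-\log b}\left\{\frac{1-\nu}{\nu}(a-a^{1-\nu}b^\nu)+\frac{\nu}{1-\nu}(a^{1-\nu}b^\nu-b)\right\}$. Kantorovich constant: $K(a,b):=\frac{(a+b)^2}{4ab}$. Weighted identric mean: $$I_\nu(a,b):=\frac1e\,\big(a\nabla_\nu b\big)^{\frac{(1-2\nu)(a\nabla_\nu b)}{\nu(1-\nu)(b-a)}}\left(\frac{b^{\frac{\nu b}{1-\nu}}}{a^{\frac{(1-\nu)a}{\nu}}}\right)^{\frac{1}{b-a}}.$$ For $\lambda\in[0,1]$ let $r_1(\lambda)=\min\{\nu\lambda,1-\nu\lambda\}$, $r_2(\lambda)=\min\{(1-\nu)\lambda,1-(1-\nu)\lambda\}$, $R_1(\lambda)=\max\{\nu\lambda,1-\nu\lambda\}$, $R_2(\lambda)=\max\{(1-\nu)\lambda,1-(1-\nu)\lambda\}$, and $\widetilde r(\nu):=\int_0^1((1-\nu)r_1(\lambda)+\nu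 r_2(\lambda))d\lambda$, $\widetilde R(\nu):=\int_0^1((1-\nu)R_1(\lambda)+\nu R_2(\lambda))d\lambda$. *)

theory Defs
  imports "HOL-Analysis.Analysis"
begin

definition wam :: "real \<Rightarrow> real \<Rightarrow> real \<Rightarrow> real" where
  "wam \<nu> a b = (1 - \<nu>) * a + \<nu> * b"

definition wgm :: "real \<Rightarrow> real \<Rightarrow> real \<Rightarrow> real" where
  "wgm \<nu> a b = a powr (1 - \<nu>) * b powr \<nu>"

definition wlm :: "real \<Rightarrow> real \<Rightarrow> real \<Rightarrow> real" where
  "wlm \<nu> a b = (1 / (ln a - ln b)) *
     ((1 - \<nu>) / \<nu> * (a - wgm \<nu> a b) + \<nu> / (1 - \<nu>) * (wgm \<nu> a b - b))"

definition kantorovich :: "real \<Rightarrow> real \<Rightarrow> real" where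
  "kantorovich a b = (a + b)^2 / (4 * a * b)"

definition wim :: "real \<Rightarrow> real \<Rightarrow> real \<Rightarrow> real" where
  "wim \<nu> a b = (1 / exp 1) *
     (wam \<nu> a b) powr (((1 - 2 * \<nu>) * wam \<nu> a b) / (\<nu> * (1 - \<nu>) * (b - a))) *
     ((b powr (\<nu> * b / (1 - \<nu>))) / (a powr ((1 - \<nu>) * a / \<nu>))) powr (1 / (b - a))"

definition r1 :: "real \<Rightarrow> real \<Rightarrow> real" where "r1 \<nu> t = min (\<nu> * t) (1 - \<nu> * t)"
definition r2 :: "real \<Rightarrow> real \<Rightarrow> real" where "r2 \<nu> t = min ((1 - \<nu>) * t) (1 - (1 - \<nu>) * t)"
definition R1 :: "real \<Rightarrow> real \<Rightarrow> real" where "R1 \<nu> t = max (\<nu> * t) (1 - \<nu> * t)"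
definition R2 :: "real \<Rightarrow> real \<Rightarrow> real" where "R2 \<nu> t = max ((1 - \<nu>) * t) (1 - (1 - \<nu>) * t)"

definition r_tilde :: "real \<Rightarrow> real" where
  "r_tilde \<nu> = integral {0..1} (\<lambda>t. (1 - \<nu>) * r1 \<nu> t + \<nu> * r2 \<nu> t)"

definition R_tilde :: "real \<Rightarrow> real" where
  "R_tilde \<nu> = integral {0..1} (\<lambda>t. (1 - \<nu>) * R1 \<nu> t + \<nu> * R2 \<nu> t)"

end

theory Submission
  imports Defs
begin

text \<open>For every weight \<mu> \<in> [0,1] the refined Young inequalities
  min(\<mu>,1-\<mu>)(\<surd>a-\<surd>b)^2 \<le> a \<nabla>_\<mu> b - a \<sharp>_\<mu> b \<le> max(\<mu>,1-\<mu>)(\<surd>a-\<surd>b)^2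
  hold, together with their multiplicative forms with the Kantorovich constant; both follow from the
  weighted AM-GM inequality by writing a \<sharp>_\<mu> b and a \<nabla>_\<mu> b as means of a, b and the midpoint means.
  Integrating a \<sharp>_\<mu> b and log(a \<nabla>_\<mu> b) with weight 1-\<nu> along \<mu> = \<nu>t and with weight \<nu> along
  \<mu> = 1-(1-\<nu>)t over t \<in> [0,1] produces L_\<nu> and log I_\<nu>, while the same averaging leaves a \<nabla>_\<nu> b and
  log a \<sharp>_\<nu> b unchanged because they are affine in \<mu>. Averaging the pointwise bounds turns
  min(\<mu>,1-\<mu>) into r1, r2 and hence into r_tilde \<nu>, and likewise max(\<mu>,1-\<mu>) into R_tilde \<nu>.\<close>

lemma wam_pos:
  assumes "0 < x" "0 < y" "0 \<le> \<mu>" "\<mu> \<le> 1"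
  shows "0 < wam \<mu> x y"
  unfolding wam_def using assms
  by (smt (verit) mult_nonneg_nonneg mult_pos_pos)

lemma wgm_pos: "0 < x \<Longrightarrow> 0 < y \<Longrightarrow> 0 < wgm \<mu> x y"
  by (simp add: wgm_def)

lemma ln_wgm: "0 < x \<Longrightarrow> 0 < y \<Longrightarrow> ln (wgm \<mu> x y) = (1 - \<mu>) * ln x + \<mu> * ln y"
  by (simp add: wgm_def ln_mult)

lemma wgm_eq_exp: "0 < x \<Longrightarrow> 0 < y \<Longrightarrow> wgm \<mu> x y = exp ((1 - \<mu>) * ln x + \<mu> * ln y)"
  by (metis ln_wgm exp_ln wgm_pos)

lemma wgm_le_wam:
  "0 < x \<Longrightarrow> 0 < y \<Longrightarrow> 0 \<le> \<mu> \<Longrightarrow> \<mu> \<le> 1 \<Longrightarrow> wgm \<mu> x y \<le> wam \<mu> x y"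
  using Youngs_inequality_0[of "1 - \<mu>" \<mu> x y] by (simp add: wgm_def wam_def)

lemma wgm_wgm:
  assumes "0 < x" "0 < y"
  shows "wgm s (wgm \<mu> x y) (wgm \<kappa> x y) = wgm ((1 - s) * \<mu> + s * \<kappa>) x y"
  using assms by (simp add: wgm_eq_exp wgm_pos ln_wgm algebra_simps)

lemma wgm_0: "0 < x \<Longrightarrow> 0 < y \<Longrightarrow> wgm 0 x y = x"
  by (simp add: wgm_def)

lemma wgm_1: "0 < x \<Longrightarrow> 0 < y \<Longrightarrow> wgm 1 x y = y"
  by (simp add: wgm_def)

lemma wgm_half: "0 < x \<Longrightarrow> 0 < y \<Longrightarrow> wgm (1/2) x y = sqrt x * sqrt y"
  by (simp add: wgm_def powr_half_sqrt)

lemma wam_swap: "wam (1 - \<mu>) y x = wam \<mu> x y"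
  by (simp add: wam_def algebra_simps)

lemma wgm_swap: "wgm (1 - \<mu>) y x = wgm \<mu> x y"
  by (simp add: wgm_def)

lemma kantorovich_commute: "kantorovich y x = kantorovich x y"
  by (simp add: kantorovich_def algebra_simps)

lemma kantorovich_pos: "0 < x \<Longrightarrow> 0 < y \<Longrightarrow> 0 < kantorovich x y"
  by (simp add: kantorovich_def)

lemma ln_kantorovich:
  assumes "0 < x" "0 < y"
  shows "ln (kantorovich x y) = 2 * ln ((x + y) / 2) - ln x - ln y"
proof -
  have "kantorovich x y = ((x + y) / 2)^2 / (x * y)"
    by (simp add: kantorovich_def power2_eq_square field_simps)
  then show ?thesis
    using assms by (simp add: ln_div ln_mult ln_realpow)
qed

lemma midpoint_weight:
  fixes \<mu> :: real
  assumes "0 \<le> \<mu>" "\<mu> \<le> 1/2"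
  obtains s where "0 \<le> s" "s \<le> 1" "(1 - s) * (1 - \<mu>) = 1/2" "(1 - s) * \<mu> + s = 1/2"
    "(2 - 2 * \<mu>) * (1 - s) = 1" "(2 - 2 * \<mu>) * s = 1 - 2 * \<mu>"
proof
  define s where "s = 1 - 1 / (2 - 2 * \<mu>)"
  have "1 \<le> 2 - 2 * \<mu>"
    using assms by simp
  then show "0 \<le> s" "s \<le> 1" and s: "(2 - 2 * \<mu>) * (1 - s) = 1"
    unfolding s_def by (simp_all add: field_simps)
  from s show "(1 - s) * (1 - \<mu>) = 1/2" "(1 - s) * \<mu> + s = 1/2" "(2 - 2 * \<mu>) * s = 1 - 2 * \<mu>"
    by (simp_all add: algebra_simps)
qed

text \<open>For \<mu> \<le> 1/2, a \<sharp>_\<mu> b is the (2\<mu>)-geometric mean of a and \<surd>(ab), and \<surd>(ab) is a weighted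
  geometric mean of a \<sharp>_\<mu> b and b; weighted AM-GM applied to each gives the two bounds.\<close>

lemma wam_minus_wgm_bounds_half:
  assumes a: "0 < a" and b: "0 < b" and "0 \<le> \<mu>" "\<mu> \<le> 1/2"
  shows "\<mu> * (sqrt a - sqrt b)^2 \<le> wam \<mu> a b - wgm \<mu> a b"
    and "wam \<mu> a b - wgm \<mu> a b \<le> (1 - \<mu>) * (sqrt a - sqrt b)^2"
proof -
  have sq: "(sqrt a - sqrt b)^2 = a + b - 2 * (sqrt a * sqrt b)"
    using a b by (simp add: power2_diff)
  have "wgm \<mu> a b = wgm (2 * \<mu>) (wgm 0 a b) (wgm (1/2) a b)"
    using a b by (simp add: wgm_wgm)
  also have "\<dots> \<le> wam (2 * \<mu>) a (sqrt a * sqrt b)"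
    using assms by (simp add: wgm_0 wgm_half wgm_le_wam)
  finally show "\<mu> * (sqrt a - sqrt b)^2 \<le> wam \<mu> a b - wgm \<mu> a b"
    unfolding sq by (simp add: wam_def algebra_simps)
  obtain s where s: "0 \<le> s" "s \<le> 1" "(1 - s) * (1 - \<mu>) = 1/2" "(1 - s) * \<mu> + s = 1/2"
    "(2 - 2 * \<mu>) * (1 - s) = 1" "(2 - 2 * \<mu>) * s = 1 - 2 * \<mu>"
    using midpoint_weight assms by blast
  have "sqrt a * sqrt b = wgm ((1 - s) * \<mu> + s * 1) a b"
    unfolding mult_1_right s(4) using a b by (simp add: wgm_half)
  also have "\<dots> = wgm s (wgm \<mu> a b) (wgm 1 a b)"
    using a b by (simp only: wgm_wgm)
  also have "\<dots> \<le> wam s (wgm \<mu> a b) b"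
    using a b s by (simp add: wgm_1 wgm_le_wam wgm_pos)
  finally have mean: "sqrt a * sqrt b \<le> wam s (wgm \<mu> a b) b" .
  have "(2 - 2 * \<mu>) * (sqrt a * sqrt b) \<le> (2 - 2 * \<mu>) * wam s (wgm \<mu> a b) b"
    using mean assms by (intro mult_left_mono) auto
  also have "\<dots> = ((2 - 2 * \<mu>) * (1 - s)) * wgm \<mu> a b + ((2 - 2 * \<mu>) * s) * b"
    by (simp add: wam_def algebra_simps)
  also have "\<dots> = wgm \<mu> a b + (1 - 2 * \<mu>) * b"
    unfolding s(5,6) by simp
  finally show "wam \<mu> a b - wgm \<mu> a b \<le> (1 - \<mu>) * (sqrt a - sqrt b)^2"
    unfolding sq by (simp add: wam_def algebra_simps)
qed

text \<open>Dually, a \<nabla>_\<mu> b is the (2\<mu>)-arithmetic mean of a and (a+b)/2, and (a+b)/2 a weighted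
  arithmetic mean of a \<nabla>_\<mu> b and b; the Kantorovich constant is ((a+b)/2)^2/(ab).\<close>

lemma ln_wam_minus_ln_wgm_bounds_half:
  assumes a: "0 < a" and b: "0 < b" and "0 \<le> \<mu>" "\<mu> \<le> 1/2"
  shows "\<mu> * ln (kantorovich a b) \<le> ln (wam \<mu> a b) - ln (wgm \<mu> a b)"
    and "ln (wam \<mu> a b) - ln (wgm \<mu> a b) \<le> (1 - \<mu>) * ln (kantorovich a b)"
proof -
  define m where "m = (a + b) / 2"
  have m: "0 < m" using a b by (simp add: m_def)
  have lnK: "ln (kantorovich a b) = 2 * ln m - ln a - ln b"
    using a b by (simp add: ln_kantorovich m_def)
  have w: "0 < wam \<mu> a b" using assms by (intro wam_pos) auto
  have "\<mu> * ln (kantorovich a b) + ln (wgm \<mu> a b) = ln (wgm (2 * \<mu>) a m)"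
    using a b m by (simp add: lnK ln_wgm algebra_simps)
  also have "\<dots> \<le> ln (wam (2 * \<mu>) a m)"
    using assms a m by (intro ln_mono wgm_pos wgm_le_wam) auto
  also have "wam (2 * \<mu>) a m = wam \<mu> a b"
    by (simp add: wam_def m_def algebra_simps)
  finally show "\<mu> * ln (kantorovich a b) \<le> ln (wam \<mu> a b) - ln (wgm \<mu> a b)"
    by simp
  obtain s where s: "0 \<le> s" "s \<le> 1" "(1 - s) * (1 - \<mu>) = 1/2" "(1 - s) * \<mu> + s = 1/2"
    "(2 - 2 * \<mu>) * (1 - s) = 1" "(2 - 2 * \<mu>) * s = 1 - 2 * \<mu>"
    using midpoint_weight assms by blast
  have "(1 - s) * ln (wam \<mu> a b) + s * ln b = ln (wgm s (wam \<mu> a b) b)"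
    using w b by (simp add: ln_wgm)
  also have "\<dots> \<le> ln (wam s (wam \<mu> a b) b)"
    using w b s by (intro ln_mono wgm_pos wgm_le_wam) auto
  also have "wam s (wam \<mu> a b) b = (1 - s) * (1 - \<mu>) * a + ((1 - s) * \<mu> + s) * b"
    by (simp add: wam_def algebra_simps)
  also have "\<dots> = m"
    unfolding s(3,4) m_def by simp
  finally have mean: "(1 - s) * ln (wam \<mu> a b) + s * ln b \<le> ln m" .
  have "ln (wam \<mu> a b) + (1 - 2 * \<mu>) * ln b
      = ((2 - 2 * \<mu>) * (1 - s)) * ln (wam \<mu> a b) + ((2 - 2 * \<mu>) * s) * ln b"
    unfolding s(5,6) by simp
  also have "\<dots> = (2 - 2 * \<mu>) * ((1 - s) * ln (wam \<mu> a b) + s * ln b)"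
    by (simp add: algebra_simps)
  also have "\<dots> \<le> (2 - 2 * \<mu>) * ln m"
    using mean assms by (intro mult_left_mono) auto
  finally show "ln (wam \<mu> a b) - ln (wgm \<mu> a b) \<le> (1 - \<mu>) * ln (kantorovich a b)"
    using a b by (simp add: lnK ln_wgm algebra_simps)
qed

lemma wam_minus_wgm_bounds:
  assumes a: "0 < a" and b: "0 < b" and "0 \<le> \<mu>" "\<mu> \<le> 1"
  shows "min \<mu> (1 - \<mu>) * (sqrt a - sqrt b)^2 \<le> wam \<mu> a b - wgm \<mu> a b
       \<and> wam \<mu> a b - wgm \<mu> a b \<le> max \<mu> (1 - \<mu>) * (sqrt a - sqrt b)^2"
proof (cases "\<mu> \<le> 1/2")
  case True
  then show ?thesis
    using wam_minus_wgm_bounds_half[OF a b] assms by (simp add: min_def max_def)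
next
  case False
  then show ?thesis
    using wam_minus_wgm_bounds_half[OF b a, of "1 - \<mu>"] assms
    by (simp add: min_def max_def wam_swap wgm_swap power2_commute)
qed

lemma ln_wam_minus_ln_wgm_bounds:
  assumes a: "0 < a" and b: "0 < b" and "0 \<le> \<mu>" "\<mu> \<le> 1"
  shows "min \<mu> (1 - \<mu>) * ln (kantorovich a b) \<le> ln (wam \<mu> a b) - ln (wgm \<mu> a b)
       \<and> ln (wam \<mu> a b) - ln (wgm \<mu> a b) \<le> max \<mu> (1 - \<mu>) * ln (kantorovich a b)"
proof (cases "\<mu> \<le> 1/2")
  case True
  then show ?thesis
    using ln_wam_minus_ln_wgm_bounds_half[OF a b] assms by (simp add: min_def max_def)
next
  case False
  then show ?thesis
    using ln_wam_minus_ln_wgm_bounds_half[OF b a, of "1 - \<mu>"] assms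
    by (simp add: min_def max_def wam_swap wgm_swap kantorovich_commute)
qed

definition split_integrand :: "real \<Rightarrow> (real \<Rightarrow> real) \<Rightarrow> real \<Rightarrow> real" where
  "split_integrand \<nu> F t = (1 - \<nu>) * F (\<nu> * t) + \<nu> * F (1 - (1 - \<nu>) * t)"

lemma split_integrand_diff:
  "split_integrand \<nu> (\<lambda>\<mu>. F \<mu> - G \<mu>) t = split_integrand \<nu> F t - split_integrand \<nu> G t"
  by (simp add: split_integrand_def algebra_simps)

lemma split_integrand_mono:
  assumes "0 \<le> \<nu>" "\<nu> \<le> 1" "t \<in> {0..1}"
    and "\<And>\<mu>. 0 \<le> \<mu> \<Longrightarrow> \<mu> \<le> 1 \<Longrightarrow> F \<mu> \<le> G \<mu>"
  shows "split_integrand \<nu> F t \<le> split_integrand \<nu> G t"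
proof -
  have "F (\<nu> * t) \<le> G (\<nu> * t)" "F (1 - (1 - \<nu>) * t) \<le> G (1 - (1 - \<nu>) * t)"
    using assms by (auto intro!: assms(4) simp: mult_le_one)
  then show ?thesis
    unfolding split_integrand_def using assms(1,2) by (intro add_mono mult_left_mono) auto
qed

lemma has_integral_split_integrand_affine:
  "(split_integrand \<nu> (\<lambda>\<mu>. (1 - \<mu>) * x + \<mu> * y) has_integral (1 - \<nu>) * x + \<nu> * y) {0..1}"
proof -
  have "split_integrand \<nu> (\<lambda>\<mu>. (1 - \<mu>) * x + \<mu> * y) = (\<lambda>t. (1 - \<nu>) * x + \<nu> * y)"
    by (simp add: split_integrand_def fun_eq_iff algebra_simps)
  then show ?thesis
    using has_integral_const_real[of "(1 - \<nu>) * x + \<nu> * y" 0 1] by simp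
qed

lemma split_integrand_min:
  "split_integrand \<nu> (\<lambda>\<mu>. min \<mu> (1 - \<mu>) * c) t = ((1 - \<nu>) * r1 \<nu> t + \<nu> * r2 \<nu> t) * c"
  by (simp add: split_integrand_def r1_def r2_def min.commute algebra_simps)

lemma split_integrand_max:
  "split_integrand \<nu> (\<lambda>\<mu>. max \<mu> (1 - \<mu>) * c) t = ((1 - \<nu>) * R1 \<nu> t + \<nu> * R2 \<nu> t) * c"
  by (simp add: split_integrand_def R1_def R2_def max.commute algebra_simps)

lemma has_integral_r_tilde:
  "((\<lambda>t. (1 - \<nu>) * r1 \<nu> t + \<nu> * r2 \<nu> t) has_integral r_tilde \<nu>) {0..1}"
  unfolding r_tilde_def r1_def r2_def
  by (intro integrable_integral integrable_continuous_interval continuous_intros)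

lemma has_integral_R_tilde:
  "((\<lambda>t. (1 - \<nu>) * R1 \<nu> t + \<nu> * R2 \<nu> t) has_integral R_tilde \<nu>) {0..1}"
  unfolding R_tilde_def R1_def R2_def
  by (intro integrable_integral integrable_continuous_interval continuous_intros)

lemma split_integrand_integral_bounds:
  assumes "0 \<le> \<nu>" "\<nu> \<le> 1"
    and bounds: "\<And>\<mu>. 0 \<le> \<mu> \<Longrightarrow> \<mu> \<le> 1 \<Longrightarrow> min \<mu> (1 - \<mu>) * c \<le> F \<mu> \<and> F \<mu> \<le> max \<mu> (1 - \<mu>) * c"
    and F: "(split_integrand \<nu> F has_integral I) {0..1}"
  shows "r_tilde \<nu> * c \<le> I \<and> I \<le> R_tilde \<nu> * c"
proof
  show "r_tilde \<nu> * c \<le> I"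
  proof (rule has_integral_le[OF has_integral_mult_left[OF has_integral_r_tilde] F])
    fix t :: real assume "t \<in> {0..1}"
    then show "((1 - \<nu>) * r1 \<nu> t + \<nu> * r2 \<nu> t) * c \<le> split_integrand \<nu> F t"
      unfolding split_integrand_min[symmetric] using assms bounds
      by (intro split_integrand_mono) auto
  qed
  show "I \<le> R_tilde \<nu> * c"
  proof (rule has_integral_le[OF F has_integral_mult_left[OF has_integral_R_tilde]])
    fix t :: real assume "t \<in> {0..1}"
    then show "split_integrand \<nu> F t \<le> ((1 - \<nu>) * R1 \<nu> t + \<nu> * R2 \<nu> t) * c"
      unfolding split_integrand_max[symmetric] using assms bounds
      by (intro split_integrand_mono) auto
  qed
qed

lemma has_integral_wgm_affine:
  assumes a: "0 < a" and b: "0 < b" and "a \<noteq> b" "\<beta> \<noteq> 0"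
  shows "((\<lambda>t. wgm (\<alpha> + \<beta> * t) a b) has_integral
           (wgm (\<alpha> + \<beta>) a b - wgm \<alpha> a b) / (\<beta> * (ln b - ln a))) {0..1}"
proof -
  have d: "\<beta> * (ln b - ln a) \<noteq> 0"
    using assms by simp
  define G where "G t = wgm (\<alpha> + \<beta> * t) a b / (\<beta> * (ln b - ln a))" for t
  have "(G has_real_derivative wgm (\<alpha> + \<beta> * t) a b) (at t)" for t
  proof -
    have "((\<lambda>t. wgm (\<alpha> + \<beta> * t) a b) has_real_derivative
            wgm (\<alpha> + \<beta> * t) a b * (\<beta> * (ln b - ln a))) (at t)"
      unfolding wgm_eq_exp[OF a b] by (rule derivative_eq_intros refl)+ (simp add: algebra_simps)
    from DERIV_cdivide[OF this, of "\<beta> * (ln b - ln a)"] show ?thesis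
      unfolding G_def using d by simp
  qed
  then have "((\<lambda>t. wgm (\<alpha> + \<beta> * t) a b) has_integral G 1 - G 0) {0..1}"
    by (intro fundamental_theorem_of_calculus)
       (auto simp: has_real_derivative_iff_has_vector_derivative[symmetric] intro: DERIV_subset)
  then show ?thesis
    by (simp add: G_def diff_divide_distrib)
qed

lemma has_integral_ln_wam_affine:
  assumes a: "0 < a" and b: "0 < b" and "a \<noteq> b" "\<beta> \<noteq> 0"
    and "0 \<le> \<alpha>" "\<alpha> \<le> 1" "0 \<le> \<alpha> + \<beta>" "\<alpha> + \<beta> \<le> 1"
  defines "H \<equiv> \<lambda>x. x * ln x - x"
  shows "((\<lambda>t. ln (wam (\<alpha> + \<beta> * t) a b)) has_integral
           (H (wam (\<alpha> + \<beta>) a b) - H (wam \<alpha> a b)) / (\<beta> * (b - a))) {0..1}"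
proof -
  have d: "\<beta> * (b - a) \<noteq> 0"
    using assms by simp
  have pos: "0 < wam (\<alpha> + \<beta> * t) a b" if "t \<in> {0..1}" for t
  proof -
    have "\<alpha> + \<beta> * t = (1 - t) * \<alpha> + t * (\<alpha> + \<beta>)"
      by (simp add: algebra_simps)
    moreover have "0 \<le> (1 - t) * \<alpha> + t * (\<alpha> + \<beta>)" "(1 - t) * \<alpha> + t * (\<alpha> + \<beta>) \<le> 1"
      using that assms convex_bound_le[of \<alpha> 1 "\<alpha> + \<beta>" "1 - t" t] by auto
    ultimately show ?thesis
      using a b by (intro wam_pos) auto
  qed
  have dW: "((\<lambda>t. wam (\<alpha> + \<beta> * t) a b) has_real_derivative \<beta> * (b - a)) (at t)" for t
    unfolding wam_def by (rule derivative_eq_intros refl)+ (simp add: algebra_simps)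
  define G where "G t = H (wam (\<alpha> + \<beta> * t) a b) / (\<beta> * (b - a))" for t
  have "(G has_real_derivative ln (wam (\<alpha> + \<beta> * t) a b)) (at t)" if "t \<in> {0..1}" for t
  proof -
    have "((\<lambda>t. H (wam (\<alpha> + \<beta> * t) a b)) has_real_derivative
            ln (wam (\<alpha> + \<beta> * t) a b) * (\<beta> * (b - a))) (at t)"
      unfolding H_def using pos[OF that]
      by (auto intro!: derivative_eq_intros dW)
    from DERIV_cdivide[OF this, of "\<beta> * (b - a)"] show ?thesis
      unfolding G_def using d by simp
  qed
  then have "((\<lambda>t. ln (wam (\<alpha> + \<beta> * t) a b)) has_integral G 1 - G 0) {0..1}"
    by (intro fundamental_theorem_of_calculus)
       (auto simp: has_real_derivative_iff_has_vector_derivative[symmetric] intro: DERIV_subset)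
  then show ?thesis
    by (simp add: G_def diff_divide_distrib)
qed

text \<open>The arguments 0 + \<nu>t and 1 + -(1-\<nu>)t are written in the \<alpha> + \<beta>t shape of the two lemmas
  above, so that their conclusions plug in without rewriting.\<close>

lemma has_integral_split_integrand:
  assumes "((\<lambda>t. F (0 + \<nu> * t)) has_integral I\<^sub>0) {0..1}"
    and "((\<lambda>t. F (1 + - (1 - \<nu>) * t)) has_integral I\<^sub>1) {0..1}"
  shows "(split_integrand \<nu> F has_integral (1 - \<nu>) * I\<^sub>0 + \<nu> * I\<^sub>1) {0..1}"
proof -
  have "split_integrand \<nu> F = (\<lambda>t. (1 - \<nu>) * F (0 + \<nu> * t) + \<nu> * F (1 + - (1 - \<nu>) * t))"
    by (simp add: split_integrand_def fun_eq_iff algebra_simps)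
  then show ?thesis
    by (simp only:) (intro has_integral_add has_integral_mult_right assms)
qed

lemma has_integral_split_integrand_wgm:
  assumes a: "0 < a" and b: "0 < b" and "a \<noteq> b" "0 < \<nu>" "\<nu> < 1"
  shows "(split_integrand \<nu> (\<lambda>\<mu>. wgm \<mu> a b) has_integral wlm \<nu> a b) {0..1}"
proof -
  have identity: "m * ((g - a) / (\<nu> * d)) + \<nu> * ((g - b) / (- m * d))
      = 1 / (- d) * (m / \<nu> * (a - g) + \<nu> / m * (g - b))"
    if "d \<noteq> 0" "m \<noteq> 0" for m d g :: real
    using that assms by (simp add: field_simps)
  have "ln a - ln b = - (ln b - ln a)"
    by simp
  then have wlm_eq: "(1 - \<nu>) * ((wgm \<nu> a b - a) / (\<nu> * (ln b - ln a)))
      + \<nu> * ((wgm \<nu> a b - b) / (- (1 - \<nu>) * (ln b - ln a))) = wlm \<nu> a b"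
    unfolding wlm_def by (simp only:) (rule identity, use assms in auto)
  have I0: "((\<lambda>t. wgm (0 + \<nu> * t) a b) has_integral (wgm \<nu> a b - a) / (\<nu> * (ln b - ln a))) {0..1}"
    using has_integral_wgm_affine[where \<alpha> = 0 and \<beta> = \<nu>] assms by (simp add: wgm_0)
  have I1: "((\<lambda>t. wgm (1 + - (1 - \<nu>) * t) a b) has_integral
      (wgm \<nu> a b - b) / (- (1 - \<nu>) * (ln b - ln a))) {0..1}"
    using has_integral_wgm_affine[where \<alpha> = 1 and \<beta> = "- (1 - \<nu>)"] assms by (simp add: wgm_1)
  from has_integral_split_integrand[OF I0 I1] show ?thesis
    unfolding wlm_eq .
qed

lemma ln_wim:
  assumes "0 < a" "0 < b" "0 < \<nu>" "\<nu> < 1"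
  shows "ln (wim \<nu> a b) = -1 + (1 - 2 * \<nu>) * wam \<nu> a b / (\<nu> * (1 - \<nu>) * (b - a)) * ln (wam \<nu> a b)
      + (\<nu> * b / (1 - \<nu>) * ln b - (1 - \<nu>) * a / \<nu> * ln a) / (b - a)"
proof -
  have "0 < wam \<nu> a b"
    using assms by (intro wam_pos) auto
  then show ?thesis
    using assms by (simp add: wim_def ln_mult ln_div)
qed

lemma has_integral_split_integrand_ln_wam:
  assumes a: "0 < a" and b: "0 < b" and "a \<noteq> b" "0 < \<nu>" "\<nu> < 1"
  shows "(split_integrand \<nu> (\<lambda>\<mu>. ln (wam \<mu> a b)) has_integral ln (wim \<nu> a b)) {0..1}"
proof -
  define H where "H x = x * ln x - x" for x :: real
  \<comment> \<open>with m = 1 - n kept abstract, field_simps can clear the denominators\<close>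
  have identity: "m * ((w * lw - w - (a * la - a)) / (n * d)) + n * ((w * lw - w - (b * lb - b)) / (- m * d))
      = -1 + (1 - 2 * n) * w / (n * m * d) * lw + (n * b / m * lb - m * a / n * la) / d"
    if "d \<noteq> 0" "n \<noteq> 0" "m \<noteq> 0" "m = 1 - n" "w = m * a + n * b" "d = b - a"
    for n m d w la lb lw :: real
  proof -
    have "(m * ((w * lw - w - (a * la - a)) / (n * d)) + n * ((w * lw - w - (b * lb - b)) / (- m * d)))
          * (n * m * d)
        = (-1 + (1 - 2 * n) * w / (n * m * d) * lw + (n * b / m * lb - m * a / n * la) / d) * (n * m * d)"
      using that(1-3) by (simp add: field_simps) (simp add: that(4-6) algebra_simps)
    then show ?thesis
      using that(1-3) by simp
  qed
  have wim_eq: "(1 - \<nu>) * ((H (wam \<nu> a b) - H a) / (\<nu> * (b - a)))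
      + \<nu> * ((H (wam \<nu> a b) - H b) / (- (1 - \<nu>) * (b - a))) = ln (wim \<nu> a b)"
    unfolding ln_wim[OF a b \<open>0 < \<nu>\<close> \<open>\<nu> < 1\<close>] H_def
    by (rule identity) (use assms in \<open>auto simp: wam_def\<close>)
  have I0: "((\<lambda>t. ln (wam (0 + \<nu> * t) a b)) has_integral (H (wam \<nu> a b) - H a) / (\<nu> * (b - a))) {0..1}"
    using has_integral_ln_wam_affine[where \<alpha> = 0 and \<beta> = \<nu>] assms by (simp add: H_def wam_def)
  have I1: "((\<lambda>t. ln (wam (1 + - (1 - \<nu>) * t) a b)) has_integral
      (H (wam \<nu> a b) - H b) / (- (1 - \<nu>) * (b - a))) {0..1}"
    using has_integral_ln_wam_affine[where \<alpha> = 1 and \<beta> = "- (1 - \<nu>)"] assms by (simp add: H_def wam_def)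
  from has_integral_split_integrand[OF I0 I1] show ?thesis
    unfolding wim_eq .
qed

lemma wim_pos:
  assumes "0 < a" "0 < b" "0 < \<nu>" "\<nu> < 1"
  shows "0 < wim \<nu> a b"
proof -
  have "0 < wam \<nu> a b"
    using assms by (intro wam_pos) auto
  then show ?thesis
    using assms by (simp add: wim_def)
qed

lemma powr_mult_le_iff_ln:
  fixes K g w x :: real
  assumes "0 < K" "0 < g" "0 < w"
  shows "K powr x * g \<le> w \<longleftrightarrow> x * ln K \<le> ln w - ln g"
    and "w \<le> K powr x * g \<longleftrightarrow> ln w - ln g \<le> x * ln K"
proof -
  have "K powr x * g = exp (x * ln K + ln g)"
    using assms by (simp add: powr_def exp_add)
  then show "K powr x * g \<le> w \<longleftrightarrow> x * ln K \<le> ln w - ln g"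
    and "w \<le> K powr x * g \<longleftrightarrow> ln w - ln g \<le> x * ln K"
    using assms
    by (simp_all add: ln_ge_iff[symmetric] ln_le_cancel_iff[symmetric] le_diff_eq diff_le_eq
        del: ln_le_cancel_iff)
qed

theorem corollary2p20:
  fixes a b \<nu> :: real
  assumes "a > 0" and "b > 0" and "a \<noteq> b" and "0 < \<nu>" and "\<nu> < 1"
  shows "r_tilde \<nu> * (sqrt a - sqrt b)^2 \<le> wam \<nu> a b - wlm \<nu> a b
       \<and> wam \<nu> a b - wlm \<nu> a b \<le> R_tilde \<nu> * (sqrt a - sqrt b)^2
       \<and> kantorovich a b powr r_tilde \<nu> * wgm \<nu> a b \<le> wim \<nu> a b
       \<and> wim \<nu> a b \<le> kantorovich a b powr R_tilde \<nu> * wgm \<nu> a b"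
proof -
  have \<nu>: "0 \<le> \<nu>" "\<nu> \<le> 1"
    using assms by auto
  have "r_tilde \<nu> * (sqrt a - sqrt b)^2 \<le> wam \<nu> a b - wlm \<nu> a b
      \<and> wam \<nu> a b - wlm \<nu> a b \<le> R_tilde \<nu> * (sqrt a - sqrt b)^2"
  proof (rule split_integrand_integral_bounds[OF \<nu>])
    show "(split_integrand \<nu> (\<lambda>\<mu>. wam \<mu> a b - wgm \<mu> a b) has_integral wam \<nu> a b - wlm \<nu> a b) {0..1}"
      unfolding split_integrand_diff wam_def
      by (intro has_integral_diff has_integral_split_integrand_affine has_integral_split_integrand_wgm assms)
  qed (use wam_minus_wgm_bounds assms in auto)
  moreover have "r_tilde \<nu> * ln (kantorovich a b) \<le> ln (wim \<nu> a b) - ln (wgm \<nu> a b)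
      \<and> ln (wim \<nu> a b) - ln (wgm \<nu> a b) \<le> R_tilde \<nu> * ln (kantorovich a b)"
  proof (rule split_integrand_integral_bounds[OF \<nu>])
    show "(split_integrand \<nu> (\<lambda>\<mu>. ln (wam \<mu> a b) - ln (wgm \<mu> a b)) has_integral
        ln (wim \<nu> a b) - ln (wgm \<nu> a b)) {0..1}"
      unfolding split_integrand_diff ln_wgm[OF assms(1,2)]
      by (intro has_integral_diff has_integral_split_integrand_affine has_integral_split_integrand_ln_wam assms)
  qed (use ln_wam_minus_ln_wgm_bounds assms in auto)
  ultimately show ?thesis
    using assms by (simp add: powr_mult_le_iff_ln kantorovich_pos wgm_pos wim_pos)
qed

end
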